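(* Let $q$ be an odd prime power, $n$ a positive integer with $n\mid(q-1)$, $\lambda\in\mathbb{F}_q^{*}$ with multiplicative order dividing $\frac{q-1}{n}$, and let $\alpha_1,\dots,\alpha_n\in\mathbb{F}_q^{*}$ be the (pairwise distinct) roots of $x^n-\lambda$, i.e. $x^n-\lambda=\prod_{i=1}^n(x-\alpha_i)$, in some fixed order. Let $\ell\ge0$, $\boldsymbol\eta=(\eta_0,\dots,\eta_\ell)\in\mathbb{F}_q^{\ell+1}\setminus\{\boldsymbol0\}$, and let $k$ be an integer with $2\le k\le\frac{n-2\ell-1}{2}$. Let $\boldsymbol v=(v_1,\dots,v_n)$ with $v_i\in\{-1,1\}$ for $1\le i\le n-k+1$ and $v_i\in\mathbb{F}_q\setminus\{-1,0,1\}$ for $n-k+2\le i\le n$. Then the $( * )$-$(\mathcal{L},\mathcal{P})$-TGRS code $\mathcal{C}$ is an LCD code, i.e. $\mathcal{C}\cap\mathcal{C}^{\perp}=\{\boldsymbol0\}$.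
   Context: The $( * )$-$(\mathcal{L},\mathcal{P})$-TGRS code is $\mathcal{C}=\{(v_1f(\alpha_1),\dots,v_nf(\alpha_n)) : f\in\mathcal{F}_{n,k,\boldsymbol\eta}\}$, where $\mathcal{F}_{n,k,\boldsymbol\eta}=\{\sum_{i=0}^{k-1}f_ix^i+f_0\sum_{j=0}^{\ell}\eta_jx^{k+j} : f_i\in\mathbb{F}_q\}$; equivalently it is generated by the $k\times n$ matrix whose first row is $\big(v_j(1+\sum_{t=0}^{\ell}\eta_t\alpha_j^{k+t})\big)_{j}$ and whose row $i$ ($1\le i\le k-1$) is $(v_j\alpha_j^{i})_j$. $\mathcal{C}^{\perp}$ is the dual with respect to the standard inner product $\sum_i x_iy_i$. *)

theory Defs
  imports "HOL-Computational_Algebra.Polynomial" "HOL-Library.Cardinality"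
begin

text \<open>Vectors of length n over a field are modelled as functions nat \<Rightarrow> 'a
  that are zero outside the index set {1..n}.\<close>

definition tgrs_poly :: "nat \<Rightarrow> nat \<Rightarrow> (nat \<Rightarrow> 'a::field) \<Rightarrow> (nat \<Rightarrow> 'a) \<Rightarrow> 'a poly" where
  "tgrs_poly k l eta fc =
     (\<Sum>i<k. monom (fc i) i) + smult (fc 0) (\<Sum>j\<le>l. monom (eta j) (k + j))"

definition tgrs_code :: "nat \<Rightarrow> nat \<Rightarrow> nat \<Rightarrow> (nat \<Rightarrow> 'a::field) \<Rightarrow> (nat \<Rightarrow> 'a)
    \<Rightarrow> (nat \<Rightarrow> 'a) \<Rightarrow> (nat \<Rightarrow> 'a) set" where
  "tgrs_code n k l eta alpha v =
     {(\<lambda>j. if j \<in> {1..n} then v j * poly (tgrs_poly k l eta fc) (alpha j) else 0) | fc. True}"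

definition dual_code :: "nat \<Rightarrow> (nat \<Rightarrow> 'a::field) set \<Rightarrow> (nat \<Rightarrow> 'a) set" where
  "dual_code n C = {y. (\<forall>j. j \<notin> {1..n} \<longrightarrow> y j = 0) \<and>
                        (\<forall>c\<in>C. (\<Sum>j=1..n. c j * y j) = 0)}"

definition is_LCD :: "nat \<Rightarrow> (nat \<Rightarrow> 'a::field) set \<Rightarrow> bool" where
  "is_LCD n C \<longleftrightarrow> C \<inter> dual_code n C = {(\<lambda>_. 0)}"

end

theory Submission
  imports Defs
begin

text \<open>
  The \<alpha>_i are the n distinct roots of x^n - \<lambda>, so the power sums \<Sum>_i \<alpha>_i^m vanish for
  0 < m < n and \<Sum>_i h(\<alpha>_i) = n h(0) whenever deg h < n.  If (v_i f(\<alpha>_i))_i lies in the hull,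
  then \<Sum>_i v_i^2 f(\<alpha>_i) g(\<alpha>_i) = 0 for every g in the polynomial space, and all degrees involved
  stay below n.  Only the k - 1 weights v_i^2 with i in S = {n-k+2..n} differ from 1.  Testing
  against g = x \<Prod>_(j \<in> S - {i}) (x - \<alpha>_j) gives f(\<alpha>_i) = 0 for i \<in> S; testing against g = f
  then gives n f(0)^2 = 0.  So f has no twisted term and degree < k, yet vanishes at 0 and at the
  k - 1 points \<alpha>_i with i \<in> S; hence f = 0.
\<close>

lemma of_nat_CARD_eq_0: "(of_nat CARD('a::{finite,ring_1}) :: 'a) = 0"
proof -
  have bij: "bij_betw (\<lambda>x::'a. x + 1) UNIV UNIV"
    by (rule bij_betw_byWitness[where f'="\<lambda>x. x - 1"]) auto
  have "(\<Sum>x\<in>(UNIV::'a set). x) = (\<Sum>x\<in>UNIV. x + 1)"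
    using sum.reindex_bij_betw[OF bij, of "\<lambda>x. x"] by simp
  also have "\<dots> = (\<Sum>x\<in>(UNIV::'a set). x) + of_nat CARD('a)"
    by (simp add: sum.distrib)
  finally show ?thesis
    by simp
qed

lemma of_nat_neq_0_if_dvd_card_minus_1:
  assumes "n dvd CARD('a::{finite,ring_1}) - 1"
  shows "(of_nat n :: 'a) \<noteq> 0"
proof
  assume n: "(of_nat n :: 'a) = 0"
  obtain m where "CARD('a) - 1 = n * m"
    using assms by blast
  then have "CARD('a) = Suc (n * m)"
    by (metis Suc_pred' finite_UNIV_card_ge_0 finite)
  then have "(of_nat CARD('a) :: 'a) = 1"
    using n by simp
  then show False
    using of_nat_CARD_eq_0 by (metis zero_neq_one)
qed

lemma
  fixes c :: "'a::idom"
  assumes "0 < m"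
  shows finite_roots_power: "finite {x. x ^ m = c}"
    and card_roots_power_le: "card {x. x ^ m = c} \<le> m"
proof -
  let ?p = "monom 1 m + [:- c:]"
  have deg: "degree ?p = m"
    using assms by (simp add: degree_add_eq_left degree_monom_eq)
  then have nz: "?p \<noteq> 0"
    using assms by auto
  have roots: "{x. x ^ m = c} = {x. poly ?p x = 0}"
    by (simp add: poly_monom)
  show "finite {x. x ^ m = c}"
    unfolding roots by (rule poly_roots_finite[OF nz])
  show "card {x. x ^ m = c} \<le> m"
    unfolding roots using card_poly_roots_bound[OF nz] deg by simp
qed

lemma sum_power_roots_eq_0:
  fixes c :: "'a::field"
  assumes card_A: "card {x. x ^ n = c} = n" and "c \<noteq> 0" and "0 < m" "m < n"
  shows "(\<Sum>x | x ^ n = c. x ^ m) = 0"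
proof -
  let ?A = "{x. x ^ n = c}"
  have "0 < n"
    using \<open>m < n\<close> by simp
  then have fin: "finite ?A"
    by (rule finite_roots_power)
  have "0 < card ?A"
    using card_A \<open>m < n\<close> by simp
  then obtain a where a: "a ^ n = c"
    by (auto simp: card_gt_0_iff)
  then have "a \<noteq> 0"
    using \<open>c \<noteq> 0\<close> \<open>m < n\<close> by auto
  have "\<not> ?A \<subseteq> {x. x ^ m = a ^ m}"
  proof
    assume "?A \<subseteq> {x. x ^ m = a ^ m}"
    then have "card ?A \<le> card {x. x ^ m = a ^ m}"
      by (rule card_mono[OF finite_roots_power[OF \<open>0 < m\<close>]])
    then show False
      using card_roots_power_le[OF \<open>0 < m\<close>, of "a ^ m"] card_A \<open>m < n\<close> by linarith
  qed
  then obtain b where b: "b ^ n = c" "b ^ m \<noteq> a ^ m"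
    by blast
  have "b \<noteq> 0"
    using b(1) \<open>c \<noteq> 0\<close> zero_power[OF \<open>0 < n\<close>] by auto
  define z where "z = b / a"
  have z: "z ^ n = 1" "z ^ m \<noteq> 1" "z \<noteq> 0"
    using a b \<open>a \<noteq> 0\<close> \<open>b \<noteq> 0\<close> \<open>c \<noteq> 0\<close> by (auto simp: z_def power_divide)
  have inj: "inj_on (\<lambda>x. z * x) ?A"
    using \<open>z \<noteq> 0\<close> by (simp add: inj_on_def)
  have "(\<lambda>x. z * x) ` ?A \<subseteq> ?A"
    using \<open>z ^ n = 1\<close> by (auto simp: power_mult_distrib)
  then have "(\<lambda>x. z * x) ` ?A = ?A"
    using endo_inj_surj[OF fin _ inj] by blast
  then have "(\<Sum>x\<in>?A. x ^ m) = (\<Sum>x\<in>?A. (z * x) ^ m)"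
    using sum.reindex[OF inj, of "\<lambda>x. x ^ m"] by simp
  also have "\<dots> = z ^ m * (\<Sum>x\<in>?A. x ^ m)"
    by (simp add: power_mult_distrib sum_distrib_left)
  finally have "(1 - z ^ m) * (\<Sum>x\<in>?A. x ^ m) = 0"
    by (simp add: algebra_simps)
  with z show ?thesis
    by simp
qed

lemma poly_prod_linear_eq_0_iff:
  fixes a :: "'b \<Rightarrow> 'a::idom"
  assumes "finite I"
  shows "poly (\<Prod>i\<in>I. [:- a i, 1:]) x = 0 \<longleftrightarrow> x \<in> a ` I"
  using assms by (auto simp: poly_prod)

lemma sum_power_linear_factors_eq_0:
  fixes a :: "'b \<Rightarrow> 'a::field"
  assumes split: "monom 1 n - [:c:] = (\<Prod>i\<in>I. [:- a i, 1:])"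
    and inj: "inj_on a I" and "card I = n" and "c \<noteq> 0" and "0 < m" "m < n"
  shows "(\<Sum>i\<in>I. a i ^ m) = 0"
proof -
  have "finite I"
    using \<open>card I = n\<close> \<open>m < n\<close> card_ge_0_finite by force
  have "x ^ n = c \<longleftrightarrow> x \<in> a ` I" for x
  proof -
    have "poly (monom 1 n - [:c:]) x = x ^ n - c"
      by (simp add: poly_monom)
    then show ?thesis
      using poly_prod_linear_eq_0_iff[OF \<open>finite I\<close>, of a x] split by simp
  qed
  then have "{x. x ^ n = c} = a ` I"
    by blast
  then show ?thesis
    using sum_power_roots_eq_0[of n c m] sum.reindex[OF inj, of "\<lambda>x. x ^ m"] assms
    by (simp add: card_image)
qed

lemma sum_poly_eq_if_power_sums_eq_0:
  fixes a :: "'b \<Rightarrow> 'a::comm_ring_1"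
  assumes power_sums: "\<And>m. 0 < m \<Longrightarrow> m < n \<Longrightarrow> (\<Sum>i\<in>I. a i ^ m) = 0"
    and "degree h < n"
  shows "(\<Sum>i\<in>I. poly h (a i)) = of_nat (card I) * coeff h 0"
proof -
  have "(\<Sum>i\<in>I. poly h (a i)) = (\<Sum>m\<le>degree h. coeff h m * (\<Sum>i\<in>I. a i ^ m))"
    by (simp add: poly_altdef sum_distrib_left sum.swap[of _ I])
  also have "\<dots> = (\<Sum>m\<le>degree h. if m = 0 then coeff h 0 * of_nat (card I) else 0)"
    using power_sums \<open>degree h < n\<close> by (intro sum.cong) auto
  also have "\<dots> = of_nat (card I) * coeff h 0"
    by (simp add: sum.delta)
  finally show ?thesis .
qed

lemma coeff_tgrs_poly:
  "coeff (tgrs_poly k l eta fc) i =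
     (if i < k then fc i else 0) + fc 0 * (\<Sum>j\<le>l. if k + j = i then eta j else 0)"
  by (simp add: tgrs_poly_def coeff_sum coeff_monom sum_distrib_left if_distrib cong: if_cong)

lemma coeff_0_tgrs_poly: "0 < k \<Longrightarrow> coeff (tgrs_poly k l eta fc) 0 = fc 0"
  by (simp add: coeff_tgrs_poly)

lemma degree_tgrs_poly_le: "degree (tgrs_poly k l eta fc) \<le> k + l"
  by (rule degree_le) (simp add: coeff_tgrs_poly)

lemma degree_tgrs_poly_le_if_coeff_0:
  "fc 0 = 0 \<Longrightarrow> degree (tgrs_poly k l eta fc) \<le> k - 1"
  by (rule degree_le) (auto simp: coeff_tgrs_poly)

lemma tgrs_poly_coeff_eq_self:
  assumes "coeff g 0 = 0" and "degree g < k"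
  shows "tgrs_poly k l eta (coeff g) = g"
proof -
  have "{..<k} = {..k - 1}"
    using assms by auto
  then show ?thesis
    using poly_as_sum_of_monoms'[of g "k - 1"] assms by (simp add: tgrs_poly_def)
qed

lemma tgrs_dual_codeword_orthogonal:
  assumes "(\<lambda>j. if j \<in> {1..n} then v j * poly f (alpha j) else 0)
             \<in> dual_code n (tgrs_code n k l eta alpha v)"
  shows "(\<Sum>j=1..n. v j ^ 2 * poly (f * tgrs_poly k l eta gc) (alpha j)) = 0"
proof -
  have codeword: "(\<lambda>j. if j \<in> {1..n} then v j * poly (tgrs_poly k l eta gc) (alpha j) else 0)
      \<in> tgrs_code n k l eta alpha v"
    by (auto simp: tgrs_code_def)
  have orth: "\<forall>c\<in>tgrs_code n k l eta alpha v.
      (\<Sum>j=1..n. c j * (if j \<in> {1..n} then v j * poly f (alpha j) else 0)) = 0"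
    using assms unfolding dual_code_def by blast
  have "(\<Sum>j=1..n. v j ^ 2 * poly (f * tgrs_poly k l eta gc) (alpha j))
      = (\<Sum>j=1..n. (if j \<in> {1..n} then v j * poly (tgrs_poly k l eta gc) (alpha j) else 0)
          * (if j \<in> {1..n} then v j * poly f (alpha j) else 0))"
    by (intro sum.cong) (auto simp: power2_eq_square)
  also have "\<dots> = 0"
    by (rule bspec[OF orth codeword])
  finally show ?thesis .
qed

locale tgrs_lcd_criterion =
  fixes n k l :: nat and eta alpha v :: "nat \<Rightarrow> 'a::field" and S :: "nat set"
  assumes alpha_inj: "inj_on alpha {1..n}"
    and alpha_nz: "\<And>j. j \<in> {1..n} \<Longrightarrow> alpha j \<noteq> 0"
    and power_sums: "\<And>m. 0 < m \<Longrightarrow> m < n \<Longrightarrow> (\<Sum>j=1..n. alpha j ^ m) = 0"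
    and n_nz: "of_nat n \<noteq> (0::'a)"
    and k_pos: "0 < k"
    and degree_bound: "2 * (k + l) < n"
    and S_sub: "S \<subseteq> {1..n}"
    and card_S: "card S = k - 1"
    and v_sq_eq_1: "\<And>j. j \<in> {1..n} - S \<Longrightarrow> v j ^ 2 = 1"
    and v_sq_neq_1: "\<And>j. j \<in> S \<Longrightarrow> v j ^ 2 \<noteq> 1"
begin

lemma finite_S: "finite S"
  using S_sub finite_subset by blast

lemma weighted_sum_poly:
  assumes "degree h < n"
  shows "(\<Sum>j=1..n. v j ^ 2 * poly h (alpha j))
           = of_nat n * coeff h 0 + (\<Sum>j\<in>S. (v j ^ 2 - 1) * poly h (alpha j))"
proof -
  have "(\<Sum>j=1..n. v j ^ 2 * poly h (alpha j))
          = (\<Sum>j=1..n. poly h (alpha j)) + (\<Sum>j=1..n. (v j ^ 2 - 1) * poly h (alpha j))"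
    by (simp add: algebra_simps flip: sum.distrib)
  also have "(\<Sum>j=1..n. poly h (alpha j)) = of_nat n * coeff h 0"
    using sum_poly_eq_if_power_sums_eq_0[OF power_sums assms] by simp
  also have "(\<Sum>j=1..n. (v j ^ 2 - 1) * poly h (alpha j)) = (\<Sum>j\<in>S. (v j ^ 2 - 1) * poly h (alpha j))"
    using S_sub v_sq_eq_1 by (intro sum.mono_neutral_right) auto
  finally show ?thesis .
qed

context
  fixes fc :: "nat \<Rightarrow> 'a"
  assumes hull: "\<And>gc. (\<Sum>j=1..n. v j ^ 2 * poly (tgrs_poly k l eta fc * tgrs_poly k l eta gc) (alpha j)) = 0"
begin

lemma hull_poly_root:
  assumes "i \<in> S"
  shows "poly (tgrs_poly k l eta fc) (alpha i) = 0"
proof -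
  let ?f = "tgrs_poly k l eta fc"
  define L where "L = (\<Prod>j\<in>S - {i}. [:- alpha j, 1:])"
  \<comment> \<open>g lies in the polynomial space and kills every weight defect except the one at i\<close>
  define g where "g = [:0, 1:] * L"
  have "0 < card S"
    using assms finite_S card_gt_0_iff by blast
  then have "2 \<le> k"
    using card_S by simp
  have "degree L \<le> card (S - {i})"
    using degree_prod_sum_le[of "S - {i}" "\<lambda>j. [:- alpha j, 1:]"] finite_S by (simp add: L_def)
  moreover have "degree g \<le> 1 + degree L"
    using degree_mult_le[of "[:0, 1:]" L] by (simp add: g_def)
  ultimately have "degree g < k"
    using card_S assms finite_S \<open>2 \<le> k\<close> by simp
  then have g_in_F: "tgrs_poly k l eta (coeff g) = g"
    by (intro tgrs_poly_coeff_eq_self) (simp_all add: g_def)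
  have "degree (?f * g) < n"
    using degree_mult_le[of ?f g] degree_tgrs_poly_le[of k l eta fc] \<open>degree g < k\<close> degree_bound
    by arith
  have L_roots: "poly L (alpha j) = 0" if "j \<in> S - {i}" for j
    unfolding L_def poly_prod using that finite_S by (intro prod_zero) auto
  have "0 = (\<Sum>j=1..n. v j ^ 2 * poly (?f * g) (alpha j))"
    using hull[of "coeff g"] g_in_F by simp
  also have "\<dots> = (\<Sum>j\<in>S. (v j ^ 2 - 1) * poly (?f * g) (alpha j))"
    using weighted_sum_poly[OF \<open>degree (?f * g) < n\<close>] by (simp add: coeff_mult_0 g_def)
  also have "\<dots> = (\<Sum>j\<in>{i}. (v j ^ 2 - 1) * poly (?f * g) (alpha j))"
    using assms finite_S L_roots by (intro sum.mono_neutral_right) (auto simp: g_def)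
  finally have "(v i ^ 2 - 1) * poly ?f (alpha i) * alpha i * poly L (alpha i) = 0"
    by (auto simp: g_def)
  moreover have "poly L (alpha i) \<noteq> 0"
    unfolding L_def poly_prod using assms S_sub alpha_inj finite_S by (auto simp: inj_on_def)
  ultimately show ?thesis
    using assms S_sub alpha_nz v_sq_neq_1 by auto
qed

lemma hull_coeff_0: "fc 0 = 0"
proof -
  let ?f = "tgrs_poly k l eta fc"
  have "degree (?f * ?f) \<le> degree ?f + degree ?f"
    by (rule degree_mult_le)
  then have "degree (?f * ?f) < n"
    using degree_tgrs_poly_le[of k l eta fc] degree_bound by simp
  have "0 = (\<Sum>j=1..n. v j ^ 2 * poly (?f * ?f) (alpha j))"
    by (rule hull[symmetric])
  also have "\<dots> = of_nat n * (fc 0 * fc 0)"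
    using weighted_sum_poly[OF \<open>degree (?f * ?f) < n\<close>] hull_poly_root k_pos
    by (simp add: coeff_mult_0 coeff_0_tgrs_poly)
  finally show ?thesis
    using n_nz by simp
qed

lemma hull_poly_eq_0: "tgrs_poly k l eta fc = 0"
proof (rule ccontr)
  let ?f = "tgrs_poly k l eta fc"
  assume "?f \<noteq> 0"
  have "card (alpha ` S) = k - 1"
    using card_image[OF inj_on_subset[OF alpha_inj S_sub]] card_S by simp
  moreover have "0 \<notin> alpha ` S"
    using alpha_nz S_sub by auto
  ultimately have "k = card (insert 0 (alpha ` S))"
    using finite_S k_pos by simp
  also have "\<dots> \<le> card {x. poly ?f x = 0}"
    using hull_poly_root hull_coeff_0 k_pos
    by (intro card_mono[OF poly_roots_finite[OF \<open>?f \<noteq> 0\<close>]])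
       (auto simp: poly_0_coeff_0 coeff_0_tgrs_poly)
  also have "\<dots> \<le> degree ?f"
    by (rule card_poly_roots_bound[OF \<open>?f \<noteq> 0\<close>])
  also have "\<dots> \<le> k - 1"
    by (rule degree_tgrs_poly_le_if_coeff_0[of fc, OF hull_coeff_0])
  finally show False
    using k_pos by simp
qed

end

theorem tgrs_code_is_LCD: "is_LCD n (tgrs_code n k l eta alpha v)"
  unfolding is_LCD_def
proof (intro equalityI subsetI)
  fix c
  assume c_hull: "c \<in> tgrs_code n k l eta alpha v \<inter> dual_code n (tgrs_code n k l eta alpha v)"
  then obtain fc where c: "c = (\<lambda>j. if j \<in> {1..n} then v j * poly (tgrs_poly k l eta fc) (alpha j) else 0)"
    by (auto simp: tgrs_code_def)
  have "tgrs_poly k l eta fc = 0"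
    using c_hull by (intro hull_poly_eq_0 tgrs_dual_codeword_orthogonal) (simp add: c)
  then show "c \<in> {\<lambda>_. 0}"
    by (auto simp: c)
next
  fix c :: "nat \<Rightarrow> 'a"
  assume "c \<in> {\<lambda>_. 0}"
  moreover have "tgrs_poly k l eta (\<lambda>_. 0) = 0"
    by (simp add: tgrs_poly_def)
  then have "(\<lambda>_. 0) \<in> tgrs_code n k l eta alpha v"
    unfolding tgrs_code_def by (auto intro!: exI[of _ "\<lambda>_. 0"])
  ultimately show "c \<in> tgrs_code n k l eta alpha v \<inter> dual_code n (tgrs_code n k l eta alpha v)"
    by (simp add: dual_code_def)
qed

end

theorem theorem4p3:
  fixes lam :: "'a::{finite,field}"
    and alpha v eta :: "nat \<Rightarrow> 'a"
    and n k l :: nat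
  assumes q_odd: "odd CARD('a)"
    and n_pos: "0 < n"
    and n_dvd: "n dvd (CARD('a) - 1)"
    and lam_nz: "lam \<noteq> 0"
    and lam_ord: "lam ^ ((CARD('a) - 1) div n) = 1"
    and alpha_inj: "inj_on alpha {1..n}"
    and alpha_nz: "\<forall>i\<in>{1..n}. alpha i \<noteq> 0"
    and alpha_roots: "monom 1 n - [:lam:] = (\<Prod>i=1..n. [:- alpha i, 1:])"
    and eta_nz: "\<exists>j\<le>l. eta j \<noteq> 0"
    and k_ge: "2 \<le> k"
    and k_le: "2 * k + 2 * l + 1 \<le> n"
    and v_pm1: "\<forall>i\<in>{1..n-k+1}. v i = 1 \<or> v i = -1"
    and v_other: "\<forall>i\<in>{n-k+2..n}. v i \<notin> {-1, 0, 1}"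
  shows "is_LCD n (tgrs_code n k l eta alpha v)"
proof -
  interpret tgrs_lcd_criterion n k l eta alpha v "{n - k + 2..n}"
  proof
    show "(\<Sum>j=1..n. alpha j ^ m) = 0" if "0 < m" "m < n" for m
      using sum_power_linear_factors_eq_0[OF alpha_roots alpha_inj] lam_nz that by simp
    show "of_nat n \<noteq> (0::'a)"
      by (rule of_nat_neq_0_if_dvd_card_minus_1[OF n_dvd])
    show "v j ^ 2 = 1" if "j \<in> {1..n} - {n - k + 2..n}" for j
      using v_pm1 that by (auto simp: power2_eq_1_iff)
    show "v j ^ 2 \<noteq> 1" if "j \<in> {n - k + 2..n}" for j
      using v_other that by (auto simp: power2_eq_1_iff)
    show "card {n - k + 2..n} = k - 1" "{n - k + 2..n} \<subseteq> {1..n}"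
      using k_le by auto
  qed (use alpha_inj alpha_nz k_ge k_le in simp_all)
  show ?thesis
    by (rule tgrs_code_is_LCD)
qed

end
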